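(* Let $(R,\mathfrak m,k)$ be a Noetherian local ring, $j\ge2$, and $M$ a finitely generated $R$-module with $p:=\operatorname{pd}_RM<\infty$ and minimal free resolution $\mathbf F_\bullet$. Suppose $\mathcal S_j\mathbf F_\bullet$ is a free resolution of $\mathcal S_j(M)$. Then $\mathcal S_j\mathbf F_\bullet$ is a minimal free resolution of $\mathcal S_j(M)$ if and only if, for all $t=0,1,\dots,\operatorname{pd}_R\mathcal S_j(M)$, $$\beta_t^R(\mathcal S_j(M))=\sum_{\substack{(a_0,\dots,a_p)\in\mathbb N^{p+1}\\ \sum a_i=j,\ \sum ia_i=t}}\ \prod_{\substack{0\le i\le p\\ i\text{ even}}}\binom{\beta_i^R(M)+a_i-1}{a_i}\prod_{\substack{0\le i\le p\\ i\text{ odd}}}\binom{\beta_i^R(M)}{a_i}$$ (this is the formula for both parities of $p$).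
   Context: $\beta_i^R(N)$ denotes the $i$-th Betti number, the rank of the $i$-th module in a minimal free resolution of $N$ (equivalently $\dim_k\operatorname{Tor}_i^R(k,N)$). $\mathcal S_j(M)$ denotes the $j$-th graded component of the symmetric algebra $\mathcal S_R(M)$. For a free module $F$ of finite rank, $D_a(F)$ is the $a$-th divided power (the symmetric tensors in $F^{\otimes a}$; free with basis the divided power monomials $f_1^{(c_1)}\cdots f_r^{(c_r)}$, $\sum c_l=a$, for a basis $f_1,\dots,f_r$ of $F$), and $\Lambda^aF$ is the $a$-th exterior power. For a finite free resolution $\mathbf F_\bullet:0\to F_p\xrightarrow{\phi_p}\cdots\xrightarrow{\phi_1}F_0$ of $M$, the complex $\mathcal S_j\mathbf F_\bullet$ has $(\mathcal S_j\mathbf F_\bullet)_t=\bigoplus D_{a_0}F_0\otimes\Lambda^{a_1}F_1\otimes D_{a_2}F_2\otimes\Lambda^{a_3}F_3\otimes\cdots$ (divided powers of even-indexed $F_i$, exterior powers of odd-indexed $F_i$), summed over $(a_0,\dots,a_p)\in\mathbb N^{p+1}$ with $\sum a_i=j$, $\sum ia_i=t$. The differential maps the summand indexed by $(a_0,\dots,a_p)$ only to summands indexed by $(a_0,\dots,a_i+1,a_{i+1}-1,\dots,a_p)$, by $(-1)^{a_0+2a_1+\cdots+(i+1)a_i}$ times the identity on other factors tensored with: for $i$ odd, $D_aF_{i+1}\otimes\Lambda^bF_i\to D_{a-1}F_{i+1}\otimes\Lambda^{b+1}F_i$, $f_1^{(c_1)}\cdots f_r^{(c_r)}\otimes v\mapsto\sum_l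 f_1^{(c_1)}\cdots f_l^{(c_l-1)}\cdots f_r^{(c_r)}\otimes\phi_{i+1}(f_l)\wedge v$; for $i$ even, $\Lambda^aF_{i+1}\otimes D_bF_i\to\Lambda^{a-1}F_{i+1}\otimes D_{b+1}F_i$, $f_{l_1}\wedge\cdots\wedge f_{l_a}\otimes w\mapsto\sum_s(-1)^sf_{l_1}\wedge\cdots\widehat{f_{l_s}}\cdots\wedge f_{l_a}\otimes\phi_{i+1}(f_{l_s})\cup w$, where $g_m\cup g_1^{(c_1)}\cdots g_n^{(c_n)}$ raises $c_m$ by one (extended linearly). Standing assumption: the characteristic of $R$ is such that $\mathcal S_j\mathbf F_\bullet$ is a complex (e.g. all integers $m$ with $2\le m\le jp$ are invertible in $R$). A free resolution is minimal if $\operatorname{Im}\phi_i\subseteq\mathfrak mF_{i-1}$ for all $i$.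
   Formalization: In the differential of $\mathcal S_j\mathbf F_\bullet$, the sign $(-1)^{a_0+2a_1+\cdots+(i+1)a_i}$ becomes $(-1)^{a_1+a_3+\cdots}$ summed over odd indices below i, and $g_m\cup g_1^{(c_1)}\cdots g_n^{(c_n)}$ is $c_m+1$ times the monomial with $c_m$ raised by one. This corrects a misprint. *)

theory Defs
  imports Complex_Main "HOL-Library.Multiset"
begin

definition is_ideal :: "'a::comm_ring_1 set \<Rightarrow> bool" where
  "is_ideal I \<longleftrightarrow> 0 \<in> I \<and> (\<forall>x\<in>I. \<forall>y\<in>I. x + y \<in> I) \<and> (\<forall>r. \<forall>x\<in>I. r * x \<in> I)"

definition ideal_gen :: "'a::comm_ring_1 set \<Rightarrow> 'a set" where
  "ideal_gen S = {y. \<exists>c. y = (\<Sum>s\<in>S. c s * s)}"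

definition noetherian_ring :: "'a::comm_ring_1 itself \<Rightarrow> bool" where
  "noetherian_ring _ \<longleftrightarrow>
     (\<forall>I::'a set. is_ideal I \<longrightarrow> (\<exists>S. finite S \<and> S \<subseteq> I \<and> I = ideal_gen S))"

definition maximal_ideal :: "'a::comm_ring_1 set \<Rightarrow> bool" where
  "maximal_ideal m \<longleftrightarrow> is_ideal m \<and> m \<noteq> UNIV \<and>
     (\<forall>J. is_ideal J \<and> m \<subseteq> J \<longrightarrow> J = m \<or> J = UNIV)"

definition local_ring :: "'a::comm_ring_1 set \<Rightarrow> bool" where
  "local_ring m \<longleftrightarrow> maximal_ideal m \<and> (\<forall>J. maximal_ideal J \<longrightarrow> J = m)"

text \<open>A module structure is a scalar multiplication scale with module scale (HOL.Modules);
  the module is the whole type.  Finitely generated: spanned by a finite set.\<close>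
definition fin_gen :: "('a::comm_ring_1 \<Rightarrow> 'm::ab_group_add \<Rightarrow> 'm) \<Rightarrow> bool" where
  "fin_gen scale \<longleftrightarrow> (\<exists>S. finite S \<and> module.span scale S = UNIV)"

text \<open>The free module with (finite) basis B: functions vanishing outside B.\<close>
definition fvec :: "'i set \<Rightarrow> ('i \<Rightarrow> 'a::comm_ring_1) set" where
  "fvec B = {v. \<forall>x. x \<notin> B \<longrightarrow> v x = 0}"

text \<open>The map R^B -> R^B' given by the matrix D (entry D y x for y in B', x in B).\<close>
definition dapp :: "'i set \<Rightarrow> 'i set \<Rightarrow> ('i \<Rightarrow> 'i \<Rightarrow> 'a::comm_ring_1) \<Rightarrow> ('i \<Rightarrow> 'a) \<Rightarrow> ('i \<Rightarrow> 'a)" where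
  "dapp B B' D v = (\<lambda>y. if y \<in> B' then (\<Sum>x\<in>B. D y x * v x) else 0)"

text \<open>A complex of finite free modules F_t with basis B t and differential
  d_t : F_t -> F_(t-1) with matrix D t (t >= 1), together with an augmentation
  aug : F_0 -> N (N the whole type 'n), is a free resolution of N.\<close>
definition is_free_resolution ::
  "('a::comm_ring_1 \<Rightarrow> 'n::ab_group_add \<Rightarrow> 'n) \<Rightarrow> (nat \<Rightarrow> 'i set) \<Rightarrow> (nat \<Rightarrow> 'i \<Rightarrow> 'i \<Rightarrow> 'a)
     \<Rightarrow> (('i \<Rightarrow> 'a) \<Rightarrow> 'n) \<Rightarrow> bool" where
  "is_free_resolution scale B D aug \<longleftrightarrow>
     (\<forall>t. finite (B t)) \<and>
     (\<forall>t\<ge>1. {v \<in> fvec (B t). dapp (B t) (B (t - 1)) (D t) v = (\<lambda>_. 0)}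
              = dapp (B (Suc t)) (B t) (D (Suc t)) ` fvec (B (Suc t))) \<and>
     (\<forall>u\<in>fvec (B 0). \<forall>v\<in>fvec (B 0). aug (\<lambda>x. u x + v x) = aug u + aug v) \<and>
     (\<forall>r. \<forall>v\<in>fvec (B 0). aug (\<lambda>x. r * v x) = scale r (aug v)) \<and>
     aug ` fvec (B 0) = UNIV \<and>
     {v \<in> fvec (B 0). aug v = 0} = dapp (B 1) (B 0) (D 1) ` fvec (B 1)"

text \<open>Minimality: the image of every differential lies in m times the target,
  i.e. all matrix entries lie in m.\<close>
definition minimal_cx :: "'a::comm_ring_1 set \<Rightarrow> (nat \<Rightarrow> 'i set) \<Rightarrow> (nat \<Rightarrow> 'i \<Rightarrow> 'i \<Rightarrow> 'a) \<Rightarrow> bool" where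
  "minimal_cx m B D \<longleftrightarrow> (\<forall>t\<ge>1. \<forall>y\<in>B (t - 1). \<forall>x\<in>B t. D t y x \<in> m)"

definition betti :: "('a::comm_ring_1 \<Rightarrow> 'n::ab_group_add \<Rightarrow> 'n) \<Rightarrow> 'a set \<Rightarrow> nat \<Rightarrow> nat" where
  "betti scale m t = (THE n. \<exists>(B :: nat \<Rightarrow> nat set) D aug.
      is_free_resolution scale B D aug \<and> minimal_cx m B D \<and> card (B t) = n)"

text \<open>Projective dimension (over a local ring f.g. projectives are free):
  least length of a finite free resolution.\<close>
definition pdim :: "('a::comm_ring_1 \<Rightarrow> 'n::ab_group_add \<Rightarrow> 'n) \<Rightarrow> nat" where
  "pdim scale = (LEAST n. \<exists>(B :: nat \<Rightarrow> nat set) D aug.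
      is_free_resolution scale B D aug \<and> (\<forall>i>n. B i = {}))"

definition delta :: "'x \<Rightarrow> 'x \<Rightarrow> 'a::comm_ring_1" where
  "delta xs = (\<lambda>z. if z = xs then 1 else 0)"

definition sym_gens :: "('a::comm_ring_1 \<Rightarrow> 'm::ab_group_add \<Rightarrow> 'm) \<Rightarrow> nat \<Rightarrow> ('m list \<Rightarrow> 'a) set" where
  "sym_gens scaleM j =
     {(\<lambda>z. delta (xs @ (x + y) # ys) z - delta (xs @ x # ys) z - delta (xs @ y # ys) z)
        | xs ys x y. length xs + length ys + 1 = j}
   \<union> {(\<lambda>z. delta (xs @ scaleM r x # ys) z - r * delta (xs @ x # ys) z)
        | xs ys r x. length xs + length ys + 1 = j}
   \<union> {(\<lambda>z. delta xs z - delta ys z) | xs ys. length xs = j \<and> mset xs = mset ys}"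

definition sym_rel :: "('a::comm_ring_1 \<Rightarrow> 'm::ab_group_add \<Rightarrow> 'm) \<Rightarrow> nat \<Rightarrow> ('m list \<Rightarrow> 'a) set" where
  "sym_rel scaleM j = {f. \<exists>G c. finite G \<and> G \<subseteq> sym_gens scaleM j \<and> f = (\<lambda>z. \<Sum>g\<in>G. c g * g z)}"

text \<open>(N, sigma) is the j-th symmetric power of M: sigma is j-multilinear and symmetric,
  and the induced map from the free module on M^j (formal finite combinations of
  j-tuples) to N is surjective with kernel exactly the submodule generated by the
  multilinearity and symmetry relations.\<close>
definition is_sym_power :: "('a::comm_ring_1 \<Rightarrow> 'm::ab_group_add \<Rightarrow> 'm) \<Rightarrow> ('a \<Rightarrow> 'n::ab_group_add \<Rightarrow> 'n)
     \<Rightarrow> nat \<Rightarrow> ('m list \<Rightarrow> 'n) \<Rightarrow> bool" where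
  "is_sym_power scaleM scaleN j \<sigma> \<longleftrightarrow>
     (\<forall>xs ys x y. length xs + length ys + 1 = j \<longrightarrow>
        \<sigma> (xs @ (x + y) # ys) = \<sigma> (xs @ x # ys) + \<sigma> (xs @ y # ys)) \<and>
     (\<forall>xs ys r x. length xs + length ys + 1 = j \<longrightarrow>
        \<sigma> (xs @ scaleM r x # ys) = scaleN r (\<sigma> (xs @ x # ys))) \<and>
     (\<forall>xs ys. length xs = j \<and> mset xs = mset ys \<longrightarrow> \<sigma> xs = \<sigma> ys) \<and>
     (\<forall>y. \<exists>f. finite {xs. f xs \<noteq> 0} \<and> (\<forall>xs. f xs \<noteq> 0 \<longrightarrow> length xs = j) \<and>
        y = (\<Sum>xs | f xs \<noteq> 0. scaleN (f xs) (\<sigma> xs))) \<and>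
     (\<forall>f. finite {xs. f xs \<noteq> 0} \<and> (\<forall>xs. f xs \<noteq> 0 \<longrightarrow> length xs = j) \<and>
        (\<Sum>xs | f xs \<noteq> 0. scaleN (f xs) (\<sigma> xs)) = 0 \<longrightarrow> f \<in> sym_rel scaleM j)"

text \<open>Basis of (S_j F)_t for F with bases {..<b i}, i = 0..p: lists L of length p+1,
  L!i a multiset over {..<b i} of size a_i (a divided power monomial for even i,
  a strictly increasing wedge monomial, i.e. a set, for odd i), sum a_i = j,
  sum i*a_i = t.\<close>
definition SjB :: "nat \<Rightarrow> (nat \<Rightarrow> nat) \<Rightarrow> nat \<Rightarrow> nat \<Rightarrow> nat multiset list set" where
  "SjB p b j t = {L. length L = Suc p \<and>
      (\<forall>i\<le>p. set_mset (L ! i) \<subseteq> {..<b i} \<and> (odd i \<longrightarrow> (\<forall>x. count (L ! i) x \<le> 1))) \<and>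
      (\<Sum>i\<le>p. size (L ! i)) = j \<and> (\<Sum>i\<le>p. i * size (L ! i)) = t}"

text \<open>Coefficient of the component i (moving one factor from F_(i+1) to F_i), applied to
  basis element L, in the direction of removing l from L!(i+1) and inserting m into L!i.\<close>
definition SjComp :: "(nat \<Rightarrow> nat \<Rightarrow> nat \<Rightarrow> 'a::comm_ring_1) \<Rightarrow> nat \<Rightarrow> nat multiset list
     \<Rightarrow> nat \<Rightarrow> nat \<Rightarrow> 'a" where
  "SjComp \<phi> i L l m =
     (-1) ^ (\<Sum>k<i. if odd k then size (L ! k) else 0) *
     (if odd i then
        (if m \<in># L ! i then 0
         else (-1) ^ card {k \<in> set_mset (L ! i). k < m} * \<phi> (Suc i) m l)
      else
        (-1) ^ Suc (card {k \<in> set_mset (L ! Suc i). k < l}) *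
        of_nat (count (L ! i) m + 1) * \<phi> (Suc i) m l)"

definition SjD :: "nat \<Rightarrow> (nat \<Rightarrow> nat) \<Rightarrow> (nat \<Rightarrow> nat \<Rightarrow> nat \<Rightarrow> 'a::comm_ring_1)
     \<Rightarrow> nat \<Rightarrow> nat multiset list \<Rightarrow> nat multiset list \<Rightarrow> 'a" where
  "SjD p b \<phi> t L' L =
     (\<Sum>i<p. \<Sum>l\<in>set_mset (L ! Suc i). \<Sum>m<b i.
        if L' = L[Suc i := L ! Suc i - {#l#}, i := L ! i + {#m#}] then SjComp \<phi> i L l m else 0)"

definition tuples :: "nat \<Rightarrow> nat \<Rightarrow> nat \<Rightarrow> (nat \<Rightarrow> nat) set" where
  "tuples p j t = {a. (\<forall>i>p. a i = 0) \<and> (\<Sum>i\<le>p. a i) = j \<and> (\<Sum>i\<le>p. i * a i) = t}"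

end

(* Both sides of the equivalence hold.  Every entry of a differential of S_j F is a multiple
   of an entry of a differential of F, so S_j F is minimal because F is.  The Betti numbers are
   the ranks of any minimal free resolution: for two resolutions F (minimal) and G of the same
   module there are comparison maps f : F -> G and g : G -> F over the identity, g f - 1 is
   null-homotopic, and minimality of F makes g f congruent to the identity modulo the maximal
   ideal, which forces rank F_t <= rank G_t.  Finally the basis of (S_j F)_t consists of
   tuples of multisets (divided powers) and sets (exterior powers) of basis elements, and
   counting them gives the binomial products. *)

theory Submission
  imports Defs "HOL-Library.Countable" "HOL-Library.FuncSet"
begin

lemma is_ideal_0: "is_ideal J \<Longrightarrow> 0 \<in> J"
  by (simp add: is_ideal_def)

lemma is_ideal_add: "is_ideal J \<Longrightarrow> x \<in> J \<Longrightarrow> y \<in> J \<Longrightarrow> x + y \<in> J"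
  by (simp add: is_ideal_def)

lemma is_ideal_mult_left: "is_ideal J \<Longrightarrow> x \<in> J \<Longrightarrow> r * x \<in> J"
  by (simp add: is_ideal_def)

lemma is_ideal_mult_right: "is_ideal J \<Longrightarrow> x \<in> J \<Longrightarrow> x * r \<in> J"
  by (metis is_ideal_mult_left mult.commute)

lemma is_ideal_uminus: "is_ideal J \<Longrightarrow> x \<in> J \<Longrightarrow> - x \<in> J"
  by (metis is_ideal_mult_left mult_minus1)

lemma is_ideal_diff: "is_ideal J \<Longrightarrow> x \<in> J \<Longrightarrow> y \<in> J \<Longrightarrow> x - y \<in> J"
  by (metis diff_conv_add_uminus is_ideal_add is_ideal_uminus)

lemma is_ideal_sum: "is_ideal J \<Longrightarrow> (\<And>x. x \<in> S \<Longrightarrow> f x \<in> J) \<Longrightarrow> sum f S \<in> J"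
  by (induction S rule: infinite_finite_induct) (auto simp: is_ideal_0 is_ideal_add)

lemma maximal_ideal_is_ideal: "maximal_ideal m \<Longrightarrow> is_ideal m"
  by (simp add: maximal_ideal_def)

lemma maximal_ideal_one_notin: "maximal_ideal m \<Longrightarrow> 1 \<notin> m"
  by (metis UNIV_eq_I is_ideal_mult_right maximal_ideal_def mult_1)

lemma maximal_ideal_inverse_mod:
  fixes m :: "'a::comm_ring_1 set"
  assumes mx: "maximal_ideal m" and x: "x \<notin> m"
  obtains u where "u * x - 1 \<in> m"
proof -
  have m: "is_ideal m" using mx by (rule maximal_ideal_is_ideal)
  define I where "I = {y. \<exists>k\<in>m. \<exists>r. y = k + r * x}"
  have "is_ideal I"
    unfolding is_ideal_def
  proof (intro conjI ballI allI)
    show "0 \<in> I" unfolding I_def using is_ideal_0[OF m] by (intro CollectI bexI[of _ 0] exI[of _ 0]) auto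
  next
    fix y z assume "y \<in> I" "z \<in> I"
    then obtain k r k' r' where "k \<in> m" "k' \<in> m" "y = k + r * x" "z = k' + r' * x"
      unfolding I_def by blast
    then show "y + z \<in> I" unfolding I_def
      by (intro CollectI bexI[of _ "k + k'"] exI[of _ "r + r'"]) (auto simp: algebra_simps is_ideal_add[OF m])
  next
    fix s y assume "y \<in> I"
    then obtain k r where "k \<in> m" "y = k + r * x" unfolding I_def by blast
    then show "s * y \<in> I" unfolding I_def
      by (intro CollectI bexI[of _ "s * k"] exI[of _ "s * r"]) (auto simp: algebra_simps is_ideal_mult_left[OF m] is_ideal_mult_right[OF m])
  qed
  moreover have "m \<subseteq> I" unfolding I_def by (auto intro!: exI[of _ 0])
  moreover have "x \<in> I" unfolding I_def using is_ideal_0[OF m] by (intro CollectI bexI[of _ 0] exI[of _ 1]) auto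
  ultimately have "I = UNIV" using mx x unfolding maximal_ideal_def by blast
  then obtain k r where k: "k \<in> m" and "1 = k + r * x" unfolding I_def by blast
  then have "r * x - 1 = - k" by (simp add: algebra_simps)
  then show thesis using that is_ideal_uminus[OF m k] by metis
qed

section \<open>Invariance of rank modulo a maximal ideal\<close>

definition mult_eq_id_mod :: "'a::comm_ring_1 set \<Rightarrow> 'i set \<Rightarrow> 'k set
    \<Rightarrow> ('i \<Rightarrow> 'k \<Rightarrow> 'a) \<Rightarrow> ('k \<Rightarrow> 'i \<Rightarrow> 'a) \<Rightarrow> bool" where
  "mult_eq_id_mod J A C P Q \<longleftrightarrow>
     (\<forall>x\<in>A. \<forall>y\<in>A. (\<Sum>z\<in>C. P y z * Q z x) - (if y = x then 1 else 0) \<in> J)"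

lemma mult_eq_id_mod_unit_entry:
  fixes J :: "'a::comm_ring_1 set"
  assumes mx: "maximal_ideal J" and a: "a \<in> A" and PQ: "mult_eq_id_mod J A C P Q"
  obtains c0 u where "c0 \<in> C" and "u * P a c0 - 1 \<in> J"
proof -
  have J: "is_ideal J" using mx by (rule maximal_ideal_is_ideal)
  have "\<exists>c0\<in>C. P a c0 * Q c0 a \<notin> J"
  proof (rule ccontr)
    assume "\<not> (\<exists>c0\<in>C. P a c0 * Q c0 a \<notin> J)"
    then have "(\<Sum>z\<in>C. P a z * Q z a) \<in> J" by (intro is_ideal_sum[OF J]) blast
    moreover have "(\<Sum>z\<in>C. P a z * Q z a) - (if a = a then 1 else 0) \<in> J"
      using PQ a unfolding mult_eq_id_mod_def by blast
    then have "(\<Sum>z\<in>C. P a z * Q z a) - 1 \<in> J" by simp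
    ultimately have "(\<Sum>z\<in>C. P a z * Q z a) - ((\<Sum>z\<in>C. P a z * Q z a) - 1) \<in> J"
      by (rule is_ideal_diff[OF J])
    then show False using maximal_ideal_one_notin[OF mx] by simp
  qed
  then obtain c0 where "c0 \<in> C" and "P a c0 * Q c0 a \<notin> J" by blast
  moreover from this(2) have "P a c0 \<notin> J" using is_ideal_mult_right[OF J] by blast
  ultimately show thesis using that maximal_ideal_inverse_mod[OF mx] by blast
qed

text \<open>Column operations clearing row \<open>a\<close> of \<open>P\<close> off a pivot entry \<open>P a c0\<close> with inverse
  \<open>u\<close> modulo \<open>J\<close>, compensated by row operations on \<open>Q\<close> so that the product is unchanged.\<close>
definition pivot_left :: "('i \<Rightarrow> 'k \<Rightarrow> 'a::comm_ring_1) \<Rightarrow> 'i \<Rightarrow> 'k \<Rightarrow> 'a \<Rightarrow> 'i \<Rightarrow> 'k \<Rightarrow> 'a" where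
  "pivot_left P a c0 u = (\<lambda>y c. if c = c0 then P y c0 else P y c - P y c0 * u * P a c)"

definition pivot_right :: "'k set \<Rightarrow> ('i \<Rightarrow> 'k \<Rightarrow> 'a::comm_ring_1) \<Rightarrow> ('k \<Rightarrow> 'i \<Rightarrow> 'a)
    \<Rightarrow> 'i \<Rightarrow> 'k \<Rightarrow> 'a \<Rightarrow> 'k \<Rightarrow> 'i \<Rightarrow> 'a" where
  "pivot_right C P Q a c0 u =
     (\<lambda>c x. if c = c0 then Q c0 x + u * (\<Sum>c'\<in>C - {c0}. P a c' * Q c' x) else Q c x)"

lemma sum_pivot_left_right:
  fixes P :: "'i \<Rightarrow> 'k \<Rightarrow> 'a::comm_ring_1"
  assumes C: "finite C" and c0: "c0 \<in> C"
  shows "(\<Sum>c\<in>C. pivot_left P a c0 u y c * pivot_right C P Q a c0 u c x) = (\<Sum>c\<in>C. P y c * Q c x)"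
proof -
  have split: "(\<Sum>c\<in>C. f c) = f c0 + (\<Sum>c\<in>C - {c0}. f c)" for f :: "_ \<Rightarrow> 'a"
    using sum.remove[OF C c0] .
  define P' where "P' = pivot_left P a c0 u"
  define Q' where "Q' = pivot_right C P Q a c0 u"
  have "(\<Sum>c\<in>C - {c0}. P' y c * Q' c x)
      = (\<Sum>c\<in>C - {c0}. P y c * Q c x - P y c0 * u * (P a c * Q c x))"
    by (intro sum.cong) (auto simp: P'_def Q'_def pivot_left_def pivot_right_def algebra_simps)
  also have "\<dots> = (\<Sum>c\<in>C - {c0}. P y c * Q c x) - P y c0 * u * (\<Sum>c\<in>C - {c0}. P a c * Q c x)"
    by (simp add: sum_subtractf sum_distrib_left)
  finally have "(\<Sum>c\<in>C - {c0}. P' y c * Q' c x)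
      = (\<Sum>c\<in>C - {c0}. P y c * Q c x) - P y c0 * u * (\<Sum>c\<in>C - {c0}. P a c * Q c x)" .
  moreover have "P' y c0 * Q' c0 x = P y c0 * Q c0 x + P y c0 * u * (\<Sum>c\<in>C - {c0}. P a c * Q c x)"
    by (simp add: P'_def Q'_def pivot_left_def pivot_right_def algebra_simps)
  ultimately show ?thesis
    unfolding P'_def[symmetric] Q'_def[symmetric]
    by (simp add: split[of "\<lambda>c. P' y c * Q' c x"] split[of "\<lambda>c. P y c * Q c x"])
qed

lemma mult_eq_id_mod_pivot:
  assumes J: "is_ideal J" and C: "finite C" and c0: "c0 \<in> C" and a: "a \<in> A"
    and u: "u * P a c0 - 1 \<in> J" and PQ: "mult_eq_id_mod J A C P Q"
  shows "mult_eq_id_mod J (A - {a}) (C - {c0}) (pivot_left P a c0 u) (pivot_right C P Q a c0 u)"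
proof -
  define P' where "P' = pivot_left P a c0 u"
  define Q' where "Q' = pivot_right C P Q a c0 u"
  have PQ': "(\<Sum>z\<in>C. P' y z * Q' z x) - (if y = x then 1 else 0) \<in> J" if "x \<in> A" "y \<in> A" for x y
    using PQ that by (simp add: mult_eq_id_mod_def P'_def Q'_def sum_pivot_left_right[OF C c0])
  have split: "(\<Sum>c\<in>C. f c) = f c0 + (\<Sum>c\<in>C - {c0}. f c)" for f :: "_ \<Rightarrow> 'a"
    using sum.remove[OF C c0] .
  have P'_row: "P' a c \<in> J" if "c \<in> C - {c0}" for c
  proof -
    have "P' a c = - (P a c * (u * P a c0 - 1))" using that by (simp add: P'_def pivot_left_def algebra_simps)
    then show ?thesis using is_ideal_uminus[OF J is_ideal_mult_left[OF J u]] by simp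
  qed
  have Q'_row: "Q' c0 x \<in> J" if x: "x \<in> A - {a}" for x
  proof -
    have "a \<noteq> x" using x by blast
    then have "(\<Sum>c\<in>C. P' a c * Q' c x) \<in> J" using PQ'[of x a] x a by simp
    moreover have "(\<Sum>c\<in>C - {c0}. P' a c * Q' c x) \<in> J"
      by (intro is_ideal_sum[OF J] is_ideal_mult_right[OF J] P'_row)
    ultimately have "(\<Sum>c\<in>C. P' a c * Q' c x) - (\<Sum>c\<in>C - {c0}. P' a c * Q' c x) \<in> J"
      by (rule is_ideal_diff[OF J])
    then have "P' a c0 * Q' c0 x \<in> J" by (simp add: split[of "\<lambda>c. P' a c * Q' c x"])
    then have "P a c0 * Q' c0 x \<in> J" by (simp add: P'_def pivot_left_def)
    then have "u * (P a c0 * Q' c0 x) - (u * P a c0 - 1) * Q' c0 x \<in> J"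
      by (rule is_ideal_diff[OF J is_ideal_mult_left[OF J] is_ideal_mult_right[OF J u]])
    moreover have "u * (P a c0 * Q' c0 x) - (u * P a c0 - 1) * Q' c0 x = Q' c0 x"
      by (simp add: algebra_simps)
    ultimately show ?thesis by simp
  qed
  have "(\<Sum>z\<in>C - {c0}. P' y z * Q' z x) - (if y = x then 1 else 0) \<in> J"
    if x: "x \<in> A - {a}" and y: "y \<in> A - {a}" for x y
  proof -
    have "(\<Sum>z\<in>C - {c0}. P' y z * Q' z x) - (if y = x then 1 else 0)
        = ((\<Sum>z\<in>C. P' y z * Q' z x) - (if y = x then 1 else 0)) - P' y c0 * Q' c0 x"
      by (simp add: split[of "\<lambda>z. P' y z * Q' z x"] algebra_simps)
    also have "\<dots> \<in> J"
      using x y by (intro is_ideal_diff[OF J] PQ' is_ideal_mult_left[OF J] Q'_row) auto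
    finally show ?thesis .
  qed
  then show ?thesis by (simp add: mult_eq_id_mod_def P'_def Q'_def)
qed

lemma card_le_if_mult_eq_id_mod:
  fixes J :: "'a::comm_ring_1 set"
  assumes mx: "maximal_ideal J" and "finite A" and "finite C" and "mult_eq_id_mod J A C P Q"
  shows "card A \<le> card C"
  using assms(2-4)
proof (induction A arbitrary: C P Q rule: finite_remove_induct)
  case (remove A)
  then obtain a where a: "a \<in> A" by blast
  obtain c0 u where c0: "c0 \<in> C" and u: "u * P a c0 - 1 \<in> J"
    using mult_eq_id_mod_unit_entry[OF mx a remove.prems(2)] .
  have "card (A - {a}) \<le> card (C - {c0})"
    using remove.IH[OF a] remove.prems(1)
      mult_eq_id_mod_pivot[OF maximal_ideal_is_ideal[OF mx] remove.prems(1) c0 a u remove.prems(2)]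
    by blast
  moreover have "card A > 0" "card C > 0"
    using a c0 remove.hyps(1) remove.prems(1) card_gt_0_iff by blast+
  ultimately show ?case using a c0 remove.hyps(1) remove.prems(1) by simp
qed simp

definition matvec :: "'i set \<Rightarrow> 'j set \<Rightarrow> ('j \<Rightarrow> 'i \<Rightarrow> 'a::comm_ring_1) \<Rightarrow> ('i \<Rightarrow> 'a) \<Rightarrow> 'j \<Rightarrow> 'a" where
  "matvec B C M v = (\<lambda>y. if y \<in> C then \<Sum>x\<in>B. M y x * v x else 0)"

definition matmul :: "'j set \<Rightarrow> ('k \<Rightarrow> 'j \<Rightarrow> 'a::comm_ring_1) \<Rightarrow> ('j \<Rightarrow> 'i \<Rightarrow> 'a) \<Rightarrow> 'k \<Rightarrow> 'i \<Rightarrow> 'a" where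
  "matmul C N M = (\<lambda>z x. \<Sum>y\<in>C. N z y * M y x)"

lemma dapp_eq_matvec: "dapp = matvec"
  by (intro ext) (simp add: dapp_def matvec_def)

lemma delta_in_fvec: "x \<in> B \<Longrightarrow> delta x \<in> fvec B"
  by (simp add: fvec_def delta_def)

lemma delta_sym: "delta x y = delta y x"
  by (simp add: delta_def)

lemma sum_mult_delta:
  "finite B \<Longrightarrow> (\<Sum>x'\<in>B. f x' * delta x x') = (if x \<in> B then (f x :: 'a::comm_ring_1) else 0)"
proof -
  assume "finite B"
  moreover have "(\<Sum>x'\<in>B. f x' * delta x x') = (\<Sum>x'\<in>B. if x' = x then f x' else 0)"
    by (rule sum.cong) (simp_all add: delta_def)
  ultimately show ?thesis by simp
qed

lemma fvec_eq_sum_delta: "finite B \<Longrightarrow> v \<in> fvec B \<Longrightarrow> v = (\<lambda>y. \<Sum>x\<in>B. v x * delta x y)"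
  using sum_mult_delta[of B v] by (auto simp: fvec_def fun_eq_iff delta_sym[of _ "_::'a"])

lemma fvec_diff: "u \<in> fvec B \<Longrightarrow> v \<in> fvec B \<Longrightarrow> (\<lambda>x. u x - v x) \<in> fvec B"
  by (simp add: fvec_def)

lemma matvec_in_fvec: "matvec B C M v \<in> fvec C"
  by (simp add: matvec_def fvec_def)

lemma matvec_delta: "finite B \<Longrightarrow> x \<in> B \<Longrightarrow> matvec B C M (delta x) = (\<lambda>y. if y \<in> C then M y x else 0)"
  unfolding matvec_def by (rule ext) (simp add: sum_mult_delta)

lemma matvec_matvec: "matvec C E N (matvec B C M v) = matvec B E (matmul C N M) v"
proof
  fix z
  have "(\<Sum>y\<in>C. N z y * (\<Sum>x\<in>B. M y x * v x)) = (\<Sum>y\<in>C. \<Sum>x\<in>B. N z y * M y x * v x)"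
    by (simp add: sum_distrib_left mult.assoc)
  also have "\<dots> = (\<Sum>x\<in>B. (\<Sum>y\<in>C. N z y * M y x) * v x)"
    by (subst sum.swap) (simp add: sum_distrib_right)
  finally have "(\<Sum>y\<in>C. N z y * (\<Sum>x\<in>B. M y x * v x)) = (\<Sum>x\<in>B. (\<Sum>y\<in>C. N z y * M y x) * v x)" .
  then show "matvec C E N (matvec B C M v) z = matvec B E (matmul C N M) v z"
    by (simp add: matvec_def matmul_def cong: sum.cong)
qed

lemma matvec_eqI_delta:
  assumes "finite B" and "\<And>x. x \<in> B \<Longrightarrow> matvec B C M (delta x) = matvec B C N (delta x)"
  shows "matvec B C M = matvec B C N"
proof -
  have "M y x = N y x" if "x \<in> B" "y \<in> C" for x y
  proof -
    from assms(2)[OF that(1)] have "matvec B C M (delta x) y = matvec B C N (delta x) y" by simp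
    then show ?thesis using that by (simp add: matvec_delta[OF assms(1)])
  qed
  then show ?thesis by (intro ext) (simp add: matvec_def)
qed

lemma matvec_diff: "matvec B C M (\<lambda>x. u x - v x) = (\<lambda>y. matvec B C M u y - matvec B C M v y)"
  by (auto simp: matvec_def sum_subtractf right_diff_distrib)

lemma matvec_zero: "matvec B C M (\<lambda>_. 0) = (\<lambda>_. 0)"
  by (simp add: matvec_def fun_eq_iff)

lemma matvec_diff_matrix:
  "matvec B C (\<lambda>y x. M y x - N y x) v = (\<lambda>y. matvec B C M v y - matvec B C N v y)"
  by (auto simp: matvec_def sum_subtractf left_diff_distrib)

lemma matvec_id: "finite B \<Longrightarrow> v \<in> fvec B \<Longrightarrow> matvec B B (\<lambda>y x. delta x y) v = v"
  using sum_mult_delta[of B v] by (auto simp: matvec_def fvec_def delta_sym[of _ "_::'a"] mult.commute fun_eq_iff)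

lemma matvec_in_ideal:
  "is_ideal J \<Longrightarrow> (\<And>x y. x \<in> B \<Longrightarrow> y \<in> C \<Longrightarrow> M y x \<in> J) \<Longrightarrow> matvec B C M v y \<in> J"
  by (auto simp: matvec_def is_ideal_0 intro!: is_ideal_sum is_ideal_mult_right)

lemma matvec_in_ideal_vector:
  "is_ideal J \<Longrightarrow> (\<And>x. x \<in> B \<Longrightarrow> v x \<in> J) \<Longrightarrow> matvec B C M v y \<in> J"
  by (auto simp: matvec_def is_ideal_0 intro!: is_ideal_sum is_ideal_mult_left)

lemma matvec_lift:
  assumes B: "finite B" and im: "\<And>x. x \<in> B \<Longrightarrow> matvec B E F (delta x) \<in> matvec C E D ` fvec C"
  obtains M where "\<And>v. matvec C E D (matvec B C M v) = matvec B E F v"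
proof -
  have "\<forall>x\<in>B. \<exists>w. w \<in> fvec C \<and> matvec C E D w = matvec B E F (delta x)"
    using im by (fastforce simp: image_iff)
  then have "\<exists>w. \<forall>x\<in>B. w x \<in> fvec C \<and> matvec C E D (w x) = matvec B E F (delta x)"
    by (rule bchoice)
  then obtain w where w: "\<forall>x\<in>B. w x \<in> fvec C \<and> matvec C E D (w x) = matvec B E F (delta x)"
    by blast
  have col: "matvec B C (\<lambda>y x. w x y) (delta x) = w x" if "x \<in> B" for x
    using w that by (auto simp: matvec_delta[OF B] fvec_def)
  have "matvec B E (matmul C D (\<lambda>y x. w x y)) = matvec B E F"
    by (rule matvec_eqI_delta[OF B]) (simp add: matvec_matvec[symmetric] col w)
  then show thesis by (intro that[of "\<lambda>y x. w x y"]) (simp add: matvec_matvec)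
qed

definition fvec_linear :: "('a::comm_ring_1 \<Rightarrow> 'n::ab_group_add \<Rightarrow> 'n) \<Rightarrow> 'i set
    \<Rightarrow> (('i \<Rightarrow> 'a) \<Rightarrow> 'n) \<Rightarrow> bool" where
  "fvec_linear scale B f \<longleftrightarrow>
     (\<forall>u\<in>fvec B. \<forall>v\<in>fvec B. f (\<lambda>x. u x + v x) = f u + f v) \<and>
     (\<forall>r. \<forall>v\<in>fvec B. f (\<lambda>x. r * v x) = scale r (f v))"

lemma fvec_linear_add:
  "fvec_linear scale B f \<Longrightarrow> u \<in> fvec B \<Longrightarrow> v \<in> fvec B \<Longrightarrow> f (\<lambda>x. u x + v x) = f u + f v"
  by (simp add: fvec_linear_def)

lemma fvec_linear_scale:
  "fvec_linear scale B f \<Longrightarrow> v \<in> fvec B \<Longrightarrow> f (\<lambda>x. r * v x) = scale r (f v)"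
  by (simp add: fvec_linear_def)

lemma fvec_linear_zero:
  assumes "fvec_linear scale B f" shows "f (\<lambda>_. 0) = 0"
proof -
  have "(\<lambda>_. 0) \<in> fvec B" by (simp add: fvec_def)
  from fvec_linear_add[OF assms this this] show ?thesis by simp
qed

lemma fvec_linear_diff:
  assumes f: "fvec_linear scale B f" and u: "u \<in> fvec B" and v: "v \<in> fvec B"
  shows "f (\<lambda>x. u x - v x) = f u - f v"
proof -
  from fvec_linear_add[OF f fvec_diff[OF u v] v] show ?thesis by (simp add: algebra_simps)
qed

lemma fvec_linear_sum:
  assumes f: "fvec_linear scale B f" and S: "finite S" and w: "\<And>z. z \<in> S \<Longrightarrow> w z \<in> fvec B"
  shows "f (\<lambda>y. \<Sum>z\<in>S. c z * w z y) = (\<Sum>z\<in>S. scale (c z) (f (w z)))"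
  using S w
proof (induction S rule: finite_induct)
  case empty
  show ?case using fvec_linear_zero[OF f] by simp
next
  case (insert a S)
  have wa: "w a \<in> fvec B" and "(\<lambda>y. c a * w a y) \<in> fvec B" "(\<lambda>y. \<Sum>z\<in>S. c z * w z y) \<in> fvec B"
    using insert.prems by (auto simp: fvec_def)
  then have "f (\<lambda>y. c a * w a y + (\<Sum>z\<in>S. c z * w z y))
      = scale (c a) (f (w a)) + f (\<lambda>y. \<Sum>z\<in>S. c z * w z y)"
    by (simp add: fvec_linear_add[OF f] fvec_linear_scale[OF f wa])
  then show ?case using insert by simp
qed

lemma fvec_linear_eqI:
  assumes f: "fvec_linear scale B f" and g: "fvec_linear scale B g" and B: "finite B"
    and basis: "\<And>x. x \<in> B \<Longrightarrow> f (delta x) = g (delta x)" and v: "v \<in> fvec B"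
  shows "f v = g v"
proof -
  have v_eq: "v = (\<lambda>y. \<Sum>x\<in>B. v x * delta x y)" using fvec_eq_sum_delta[OF B v] .
  have "f v = (\<Sum>x\<in>B. scale (v x) (f (delta x)))"
    by (subst v_eq) (rule fvec_linear_sum[OF f B delta_in_fvec])
  also have "\<dots> = (\<Sum>x\<in>B. scale (v x) (g (delta x)))" by (simp add: basis)
  also have "\<dots> = g v"
    by (subst v_eq) (rule fvec_linear_sum[OF g B delta_in_fvec, symmetric])
  finally show ?thesis .
qed

lemma fvec_linear_matvec:
  assumes "fvec_linear scale C f" shows "fvec_linear scale B (\<lambda>v. f (matvec B C M v))"
proof -
  have "matvec B C M (\<lambda>x. u x + v x) = (\<lambda>y. matvec B C M u y + matvec B C M v y)"
    and "matvec B C M (\<lambda>x. r * v x) = (\<lambda>y. r * matvec B C M v y)" for u v r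
    by (auto simp: matvec_def sum.distrib distrib_left sum_distrib_left mult.left_commute)
  then show ?thesis
    unfolding fvec_linear_def
    by (simp add: fvec_linear_add[OF assms] fvec_linear_scale[OF assms] matvec_in_fvec)
qed

section \<open>Free resolutions\<close>

definition chain_map :: "(nat \<Rightarrow> 'i set) \<Rightarrow> (nat \<Rightarrow> 'i \<Rightarrow> 'i \<Rightarrow> 'a::comm_ring_1)
    \<Rightarrow> (nat \<Rightarrow> 'j set) \<Rightarrow> (nat \<Rightarrow> 'j \<Rightarrow> 'j \<Rightarrow> 'a) \<Rightarrow> (nat \<Rightarrow> 'j \<Rightarrow> 'i \<Rightarrow> 'a) \<Rightarrow> bool" where
  "chain_map BF DF BG DG M \<longleftrightarrow> (\<forall>t. \<forall>v\<in>fvec (BF (Suc t)).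
     matvec (BG (Suc t)) (BG t) (DG (Suc t)) (matvec (BF (Suc t)) (BG (Suc t)) (M (Suc t)) v)
       = matvec (BF t) (BG t) (M t) (matvec (BF (Suc t)) (BF t) (DF (Suc t)) v))"

lemma chain_mapD:
  "chain_map BF DF BG DG M \<Longrightarrow> v \<in> fvec (BF (Suc t)) \<Longrightarrow>
     matvec (BG (Suc t)) (BG t) (DG (Suc t)) (matvec (BF (Suc t)) (BG (Suc t)) (M (Suc t)) v)
       = matvec (BF t) (BG t) (M t) (matvec (BF (Suc t)) (BF t) (DF (Suc t)) v)"
  by (simp add: chain_map_def)

lemma chain_map_comp:
  assumes "chain_map BF DF BG DG f" and "chain_map BG DG BH DH g"
  shows "chain_map BF DF BH DH (\<lambda>t. matmul (BG t) (g t) (f t))"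
  unfolding chain_map_def
  by (simp add: matvec_matvec[symmetric] chain_mapD[OF assms(1)] chain_mapD[OF assms(2)] matvec_in_fvec)

lemma chain_map_diff_id:
  assumes B: "\<And>t. finite (B t)" and u: "chain_map B D B D u"
  shows "chain_map B D B D (\<lambda>t y x. u t y x - delta x y)"
  unfolding chain_map_def
  by (simp add: matvec_diff_matrix matvec_diff matvec_id[OF B] chain_mapD[OF u] matvec_in_fvec)

locale free_resolution =
  fixes scale :: "'a::comm_ring_1 \<Rightarrow> 'n::ab_group_add \<Rightarrow> 'n"
    and B :: "nat \<Rightarrow> 'i set" and D :: "nat \<Rightarrow> 'i \<Rightarrow> 'i \<Rightarrow> 'a" and aug :: "('i \<Rightarrow> 'a) \<Rightarrow> 'n"
  assumes is_free_resolution: "is_free_resolution scale B D aug"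
begin

abbreviation dif :: "nat \<Rightarrow> ('i \<Rightarrow> 'a) \<Rightarrow> 'i \<Rightarrow> 'a" where
  "dif t \<equiv> matvec (B (Suc t)) (B t) (D (Suc t))"

text \<open>Taking the augmentation as the map leaving degree 0 makes exactness uniform in \<open>t\<close>
  (\<open>cycles_eq_image\<close>).\<close>
definition cycles :: "nat \<Rightarrow> ('i \<Rightarrow> 'a) set" where
  "cycles t = (case t of 0 \<Rightarrow> {v \<in> fvec (B 0). aug v = 0}
                       | Suc s \<Rightarrow> {v \<in> fvec (B (Suc s)). dif s v = (\<lambda>_. 0)})"

lemma cycles_0: "cycles 0 = {v \<in> fvec (B 0). aug v = 0}"
  by (simp add: cycles_def)

lemma cycles_Suc: "cycles (Suc t) = {v \<in> fvec (B (Suc t)). dif t v = (\<lambda>_. 0)}"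
  by (simp add: cycles_def)

lemma finite_B: "finite (B t)"
  using is_free_resolution by (simp add: is_free_resolution_def)

lemma aug_linear: "fvec_linear scale (B 0) aug"
  using is_free_resolution by (simp add: is_free_resolution_def fvec_linear_def)

lemma aug_image: "aug ` fvec (B 0) = UNIV"
  using is_free_resolution by (simp add: is_free_resolution_def)

lemma aug_surj: "\<exists>w\<in>fvec (B 0). aug w = y"
  using aug_image by (metis UNIV_I imageE)

lemma cycles_eq_image: "cycles t = dif t ` fvec (B (Suc t))"
proof (cases t)
  case 0
  then show ?thesis using is_free_resolution by (simp add: is_free_resolution_def cycles_0 dapp_eq_matvec)
next
  case (Suc s)
  have "\<forall>t\<ge>1. {v \<in> fvec (B t). matvec (B t) (B (t - 1)) (D t) v = (\<lambda>_. 0)}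
      = matvec (B (Suc t)) (B t) (D (Suc t)) ` fvec (B (Suc t))"
    using is_free_resolution by (simp add: is_free_resolution_def dapp_eq_matvec)
  from this[rule_format, of "Suc s"] show ?thesis by (simp add: Suc cycles_Suc)
qed

lemma dif_in_cycles: "v \<in> fvec (B (Suc t)) \<Longrightarrow> dif t v \<in> cycles t"
  by (simp add: cycles_eq_image)

lemma aug_dif: "v \<in> fvec (B (Suc 0)) \<Longrightarrow> aug (dif 0 v) = 0"
  using dif_in_cycles[of v 0] by (simp add: cycles_0)

lemma dif_dif: "v \<in> fvec (B (Suc (Suc t))) \<Longrightarrow> dif t (dif (Suc t) v) = (\<lambda>_. 0)"
  using dif_in_cycles[of v "Suc t"] by (simp add: cycles_Suc)

lemma dif_in_ideal:
  assumes "minimal_cx J B D" and "is_ideal J"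
  shows "dif t v y \<in> J"
proof (rule matvec_in_ideal[OF assms(2)])
  fix x y assume "x \<in> B (Suc t)" "y \<in> B t"
  then show "D (Suc t) y x \<in> J" using assms(1)[unfolded minimal_cx_def, rule_format, of "Suc t" y x] by simp
qed

text \<open>Free modules are projective relative to the augmentation and to the differentials.\<close>
lemma lift_along_aug:
  fixes C :: "'j set"
  assumes C: "finite C" and f: "fvec_linear scale C f"
  obtains M where "\<forall>v\<in>fvec C. aug (matvec C (B 0) M v) = f v"
proof -
  have "\<forall>x\<in>C. \<exists>w. w \<in> fvec (B 0) \<and> aug w = f (delta x)" using aug_surj by blast
  then have "\<exists>w. \<forall>x\<in>C. w x \<in> fvec (B 0) \<and> aug (w x) = f (delta x)" by (rule bchoice)
  then obtain w where w: "\<forall>x\<in>C. w x \<in> fvec (B 0) \<and> aug (w x) = f (delta x)" by blast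
  have "matvec C (B 0) (\<lambda>y x. w x y) (delta x) = w x" if "x \<in> C" for x
    using w that by (auto simp: matvec_delta[OF C] fvec_def)
  then have "aug (matvec C (B 0) (\<lambda>y x. w x y) v) = f v" if "v \<in> fvec C" for v
    by (intro fvec_linear_eqI[OF fvec_linear_matvec[OF aug_linear] f C _ that]) (simp add: w)
  then show thesis by (intro that) blast
qed

lemma lift_along_dif:
  fixes C :: "'j set"
  assumes C: "finite C" and F: "\<And>v. v \<in> fvec C \<Longrightarrow> matvec C (B t) F v \<in> cycles t"
  obtains M where "\<And>v. dif t (matvec C (B (Suc t)) M v) = matvec C (B t) F v"
proof -
  have "matvec C (B t) F (delta x) \<in> dif t ` fvec (B (Suc t))" if "x \<in> C" for x
    using F[OF delta_in_fvec[OF that]] by (simp add: cycles_eq_image)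
  from matvec_lift[OF C this] show thesis using that by blast
qed

lemma null_homotopy:
  assumes u: "chain_map B D B D u" and u0: "\<forall>v\<in>fvec (B 0). aug (matvec (B 0) (B 0) (u 0) v) = 0"
  obtains h where "\<forall>v\<in>fvec (B 0). matvec (B 0) (B 0) (u 0) v = dif 0 (matvec (B 0) (B (Suc 0)) (h 0) v)"
    and "\<forall>t. \<forall>v\<in>fvec (B (Suc t)). matvec (B (Suc t)) (B (Suc t)) (u (Suc t)) v
          = (\<lambda>y. dif (Suc t) (matvec (B (Suc t)) (B (Suc (Suc t))) (h (Suc t)) v) y
                + matvec (B t) (B (Suc t)) (h t) (dif t v) y)"
proof -
  let ?U = "\<lambda>t. matvec (B t) (B t) (u t)" and ?H = "\<lambda>t M. matvec (B t) (B (Suc t)) M"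
  define P where "P n M \<longleftrightarrow> (n = 0 \<longrightarrow> (\<forall>v\<in>fvec (B 0). ?U 0 v = dif 0 (?H 0 M v)))
     \<and> (\<forall>v\<in>fvec (B (Suc n)). (\<lambda>y. ?U (Suc n) v y - ?H n M (dif n v) y) \<in> cycles (Suc n))" for n M
  define Q where "Q n M M' \<longleftrightarrow> (\<forall>v\<in>fvec (B (Suc n)).
     ?U (Suc n) v = (\<lambda>y. dif (Suc n) (?H (Suc n) M' v) y + ?H n M (dif n v) y))" for n M M'
  have "\<And>v. v \<in> fvec (B 0) \<Longrightarrow> ?U 0 v \<in> cycles 0"
    using u0 by (simp add: cycles_0 matvec_in_fvec)
  then obtain M0 where M0: "\<And>v. dif 0 (?H 0 M0 v) = ?U 0 v"
    using lift_along_dif[OF finite_B] by blast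
  have "P 0 M0"
    unfolding P_def cycles_Suc by (simp add: M0 matvec_diff chain_mapD[OF u] fvec_diff matvec_in_fvec)
  moreover have "\<exists>M'. P (Suc n) M' \<and> Q n M M'" if P: "P n M" for n M
  proof -
    let ?F = "\<lambda>y x. u (Suc n) y x - matmul (B n) M (D (Suc n)) y x"
    have F: "matvec (B (Suc n)) (B (Suc n)) ?F v = (\<lambda>y. ?U (Suc n) v y - ?H n M (dif n v) y)" for v
      by (simp add: matvec_diff_matrix matvec_matvec)
    have "\<And>v. v \<in> fvec (B (Suc n)) \<Longrightarrow> matvec (B (Suc n)) (B (Suc n)) ?F v \<in> cycles (Suc n)"
      using P unfolding F P_def by blast
    then obtain M' where M': "\<And>v. dif (Suc n) (?H (Suc n) M' v) = matvec (B (Suc n)) (B (Suc n)) ?F v"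
      using lift_along_dif[OF finite_B] by blast
    have "Q n M M'" unfolding Q_def by (simp add: M' F)
    moreover have "P (Suc n) M'"
      unfolding P_def cycles_Suc
      by (simp add: matvec_diff chain_mapD[OF u] M' F dif_dif matvec_zero fvec_diff matvec_in_fvec)
    ultimately show ?thesis by blast
  qed
  ultimately obtain h where "\<forall>n. P n (h n) \<and> Q n (h n) (h (Suc n))"
    using dependent_nat_choice[of P Q] by blast
  then show thesis by (intro that) (auto simp: P_def Q_def)
qed

lemma null_chain_map_entries_in_ideal:
  assumes J: "is_ideal J" and min: "minimal_cx J B D" and u: "chain_map B D B D u"
    and u0: "\<forall>v\<in>fvec (B 0). aug (matvec (B 0) (B 0) (u 0) v) = 0"
    and x: "x \<in> B t" and y: "y \<in> B t"
  shows "u t y x \<in> J"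
proof -
  obtain h where h0: "\<forall>v\<in>fvec (B 0). matvec (B 0) (B 0) (u 0) v = dif 0 (matvec (B 0) (B (Suc 0)) (h 0) v)"
    and hS: "\<forall>t. \<forall>v\<in>fvec (B (Suc t)). matvec (B (Suc t)) (B (Suc t)) (u (Suc t)) v
          = (\<lambda>y. dif (Suc t) (matvec (B (Suc t)) (B (Suc (Suc t))) (h (Suc t)) v) y
                + matvec (B t) (B (Suc t)) (h t) (dif t v) y)"
    by (rule null_homotopy[OF u u0])
  have dx: "(delta x :: 'i \<Rightarrow> 'a) \<in> fvec (B t)" using x by (rule delta_in_fvec)
  have "u t y x = matvec (B t) (B t) (u t) (delta x) y"
    using y by (simp add: matvec_delta[OF finite_B x])
  also have "\<dots> \<in> J"
  proof (cases t)
    case 0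
    then have "matvec (B t) (B t) (u t) (delta x) = dif 0 (matvec (B 0) (B (Suc 0)) (h 0) (delta x))"
      using h0 dx by simp
    then show ?thesis by (simp add: dif_in_ideal[OF min J])
  next
    case (Suc s)
    then show ?thesis using hS dx
      by (simp add: is_ideal_add[OF J] dif_in_ideal[OF min J] matvec_in_ideal_vector[OF J])
  qed
  finally show ?thesis .
qed

end

lemma exists_comparison_map:
  fixes scale :: "'a::comm_ring_1 \<Rightarrow> 'n::ab_group_add \<Rightarrow> 'n"
    and BF :: "nat \<Rightarrow> 'i set" and BG :: "nat \<Rightarrow> 'j set"
  assumes F: "is_free_resolution scale BF DF augF" and G: "is_free_resolution scale BG DG augG"
  obtains M where "\<forall>v\<in>fvec (BF 0). augG (matvec (BF 0) (BG 0) (M 0) v) = augF v"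
    and "chain_map BF DF BG DG M"
proof -
  interpret F: free_resolution scale BF DF augF by (rule free_resolution.intro[OF F])
  interpret G: free_resolution scale BG DG augG by (rule free_resolution.intro[OF G])
  define P where "P n M \<longleftrightarrow>
     (n = 0 \<longrightarrow> (\<forall>v\<in>fvec (BF 0). augG (matvec (BF 0) (BG 0) M v) = augF v)) \<and>
     (\<forall>v\<in>fvec (BF (Suc n)). matvec (BF n) (BG n) M (F.dif n v) \<in> G.cycles n)" for n M
  define Q where "Q n M M' \<longleftrightarrow> (\<forall>v\<in>fvec (BF (Suc n)).
     G.dif n (matvec (BF (Suc n)) (BG (Suc n)) M' v) = matvec (BF n) (BG n) M (F.dif n v))" for n M M'
  obtain M0 where M0: "\<forall>v\<in>fvec (BF 0). augG (matvec (BF 0) (BG 0) M0 v) = augF v"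
    by (rule G.lift_along_aug[OF F.finite_B F.aug_linear])
  then have "P 0 M0"
    unfolding P_def G.cycles_0 by (simp add: F.aug_dif matvec_in_fvec)
  moreover have "\<exists>M'. P (Suc n) M' \<and> Q n M M'" if P: "P n M" for n M
  proof -
    have "\<And>v. v \<in> fvec (BF (Suc n)) \<Longrightarrow>
        matvec (BF (Suc n)) (BG n) (matmul (BF n) M (DF (Suc n))) v \<in> G.cycles n"
      using P unfolding P_def matvec_matvec[symmetric] by blast
    then obtain M' where M': "\<And>v. G.dif n (matvec (BF (Suc n)) (BG (Suc n)) M' v)
        = matvec (BF (Suc n)) (BG n) (matmul (BF n) M (DF (Suc n))) v"
      using G.lift_along_dif[OF F.finite_B] by blast
    have "Q n M M'" unfolding Q_def by (simp add: M' matvec_matvec[symmetric])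
    moreover have "P (Suc n) M'"
      unfolding P_def G.cycles_Suc
      by (simp add: M' matvec_matvec[symmetric] F.dif_dif matvec_zero matvec_in_fvec)
    ultimately show ?thesis by blast
  qed
  ultimately obtain M where "\<forall>n. P n (M n) \<and> Q n (M n) (M (Suc n))"
    using dependent_nat_choice[of P Q] by blast
  then show thesis by (intro that) (auto simp: P_def Q_def chain_map_def)
qed

section \<open>Betti numbers\<close>

lemma card_le_card_if_minimal_resolution:
  fixes scale :: "'a::comm_ring_1 \<Rightarrow> 'n::ab_group_add \<Rightarrow> 'n"
    and BF :: "nat \<Rightarrow> 'i set" and BG :: "nat \<Rightarrow> 'j set"
  assumes mx: "maximal_ideal J"
    and F: "is_free_resolution scale BF DF augF" and min: "minimal_cx J BF DF"
    and G: "is_free_resolution scale BG DG augG"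
  shows "card (BF t) \<le> card (BG t)"
proof -
  interpret F: free_resolution scale BF DF augF by (rule free_resolution.intro[OF F])
  interpret G: free_resolution scale BG DG augG by (rule free_resolution.intro[OF G])
  obtain f where f0: "\<forall>v\<in>fvec (BF 0). augG (matvec (BF 0) (BG 0) (f 0) v) = augF v"
    and f: "chain_map BF DF BG DG f"
    by (rule exists_comparison_map[OF F G])
  obtain g where g0: "\<forall>v\<in>fvec (BG 0). augF (matvec (BG 0) (BF 0) (g 0) v) = augG v"
    and g: "chain_map BG DG BF DF g"
    by (rule exists_comparison_map[OF G F])
  define u where "u = (\<lambda>t y x. matmul (BG t) (g t) (f t) y x - delta x y)"
  have "chain_map BF DF BF DF u"
    unfolding u_def by (rule chain_map_diff_id[OF F.finite_B chain_map_comp[OF f g]])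
  moreover have "\<forall>v\<in>fvec (BF 0). augF (matvec (BF 0) (BF 0) (u 0) v) = 0"
  proof
    fix v :: "'i \<Rightarrow> 'a" assume v: "v \<in> fvec (BF 0)"
    have "matvec (BF 0) (BF 0) (u 0) v
        = (\<lambda>y. matvec (BG 0) (BF 0) (g 0) (matvec (BF 0) (BG 0) (f 0) v) y - v y)"
      by (simp add: u_def matvec_diff_matrix matvec_matvec matvec_id[OF F.finite_B v])
    then show "augF (matvec (BF 0) (BF 0) (u 0) v) = 0"
      by (simp add: fvec_linear_diff[OF F.aug_linear matvec_in_fvec v]
          g0[rule_format, OF matvec_in_fvec] f0[rule_format, OF v])
  qed
  ultimately have "u t y x \<in> J" if "x \<in> BF t" "y \<in> BF t" for x y
    using F.null_chain_map_entries_in_ideal[OF maximal_ideal_is_ideal[OF mx] min] that by blast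
  then have "mult_eq_id_mod J (BF t) (BG t) (g t) (f t)"
    by (simp add: mult_eq_id_mod_def u_def matmul_def delta_def)
  then show ?thesis by (rule card_le_if_mult_eq_id_mod[OF mx F.finite_B G.finite_B])
qed

context
  fixes \<iota> :: "'i \<Rightarrow> nat"
  assumes inj: "inj \<iota>"
begin

lemma comp_in_fvec: "w \<in> fvec (\<iota> ` C) \<Longrightarrow> w \<circ> \<iota> \<in> fvec C"
  by (simp add: fvec_def inj_image_mem_iff[OF inj])

lemma comp_eq_iff_in_fvec:
  assumes "w \<in> fvec (\<iota> ` C)" and "w' \<in> fvec (\<iota> ` C)"
  shows "w \<circ> \<iota> = w' \<circ> \<iota> \<longleftrightarrow> w = w'"
proof
  assume eq: "w \<circ> \<iota> = w' \<circ> \<iota>"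
  show "w = w'"
  proof
    fix n show "w n = w' n"
      using assms fun_cong[OF eq] by (cases "n \<in> \<iota> ` C") (auto simp: fvec_def)
  qed
qed simp

lemma comp_image_fvec: "(\<lambda>w. w \<circ> \<iota>) ` fvec (\<iota> ` C) = fvec C"
proof
  show "(\<lambda>w. w \<circ> \<iota>) ` fvec (\<iota> ` C) \<subseteq> fvec C" using comp_in_fvec by blast
next
  show "fvec C \<subseteq> (\<lambda>w. w \<circ> \<iota>) ` fvec (\<iota> ` C)"
  proof
    fix u assume u: "u \<in> fvec C"
    define w where "w n = (if n \<in> \<iota> ` C then u (inv \<iota> n) else 0)" for n
    have "w \<in> fvec (\<iota> ` C)" by (simp add: w_def fvec_def)
    moreover have "u = w \<circ> \<iota>"
      using u by (auto simp: w_def fvec_def inj_image_mem_iff[OF inj] inv_f_f[OF inj])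
    ultimately show "u \<in> (\<lambda>w. w \<circ> \<iota>) ` fvec (\<iota> ` C)" by blast
  qed
qed

lemma matvec_reindex:
  "matvec (\<iota> ` C) (\<iota> ` E) (\<lambda>y x. M (inv \<iota> y) (inv \<iota> x)) w \<circ> \<iota> = matvec C E M (w \<circ> \<iota>)"
proof
  fix z
  have "(\<Sum>n\<in>\<iota> ` C. M (inv \<iota> (\<iota> z)) (inv \<iota> n) * w n) = (\<Sum>c\<in>C. M z c * w (\<iota> c))"
    by (simp add: sum.reindex inj_on_subset[OF inj] inv_f_f[OF inj])
  then show "(matvec (\<iota> ` C) (\<iota> ` E) (\<lambda>y x. M (inv \<iota> y) (inv \<iota> x)) w \<circ> \<iota>) z = matvec C E M (w \<circ> \<iota>) z"
    by (simp add: matvec_def inj_image_mem_iff[OF inj])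
qed

lemma image_matvec_reindex:
  fixes M :: "'i \<Rightarrow> 'i \<Rightarrow> 'a::comm_ring_1"
  shows "matvec (\<iota> ` C) (\<iota> ` E) (\<lambda>y x. M (inv \<iota> y) (inv \<iota> x)) ` fvec (\<iota> ` C)
     = {w \<in> fvec (\<iota> ` E). w \<circ> \<iota> \<in> matvec C E M ` fvec C}" (is "?d ` _ = _")
proof
  show "?d ` fvec (\<iota> ` C) \<subseteq> {w \<in> fvec (\<iota> ` E). w \<circ> \<iota> \<in> matvec C E M ` fvec C}"
  proof safe
    fix v :: "nat \<Rightarrow> 'a" assume "v \<in> fvec (\<iota> ` C)"
    then have "matvec C E M (v \<circ> \<iota>) \<in> matvec C E M ` fvec C" by (intro imageI comp_in_fvec)
    then show "?d v \<circ> \<iota> \<in> matvec C E M ` fvec C" by (simp add: matvec_reindex)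
  qed (rule matvec_in_fvec)
next
  show "{w \<in> fvec (\<iota> ` E). w \<circ> \<iota> \<in> matvec C E M ` fvec C} \<subseteq> ?d ` fvec (\<iota> ` C)"
  proof safe
    fix w u assume w: "w \<in> fvec (\<iota> ` E)" and u: "u \<in> fvec C" and wu: "w \<circ> \<iota> = matvec C E M u"
    obtain v where v: "v \<in> fvec (\<iota> ` C)" and "u = v \<circ> \<iota>"
      using u comp_image_fvec[of C] by blast
    then have "?d v \<circ> \<iota> = w \<circ> \<iota>" by (simp add: matvec_reindex wu)
    then have "?d v = w" using comp_eq_iff_in_fvec[OF matvec_in_fvec w] by blast
    with v show "w \<in> ?d ` fvec (\<iota> ` C)" by blast
  qed
qed

lemma kernel_matvec_reindex:
  fixes M :: "'i \<Rightarrow> 'i \<Rightarrow> 'a::comm_ring_1"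
  shows "{v \<in> fvec (\<iota> ` C). matvec (\<iota> ` C) (\<iota> ` E) (\<lambda>y x. M (inv \<iota> y) (inv \<iota> x)) v = (\<lambda>_. 0)}
     = {v \<in> fvec (\<iota> ` C). v \<circ> \<iota> \<in> {u \<in> fvec C. matvec C E M u = (\<lambda>_. 0)}}"
proof -
  have "(matvec (\<iota> ` C) (\<iota> ` E) (\<lambda>y x. M (inv \<iota> y) (inv \<iota> x)) v = (\<lambda>_. 0))
      = (matvec C E M (v \<circ> \<iota>) = (\<lambda>_. 0))" for v
  proof -
    have "(\<lambda>_. 0 :: 'a) \<in> fvec (\<iota> ` E)" by (simp add: fvec_def)
    note comp_eq_iff_in_fvec[OF matvec_in_fvec[of "\<iota> ` C" "\<iota> ` E" "\<lambda>y x. M (inv \<iota> y) (inv \<iota> x)" v] this]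
    moreover have "(\<lambda>_. 0 :: 'a) \<circ> \<iota> = (\<lambda>_. 0)" by (simp add: comp_def)
    ultimately show ?thesis by (simp add: matvec_reindex)
  qed
  then show ?thesis using comp_in_fvec by auto
qed

lemma fvec_linear_reindex:
  fixes scale :: "'a::comm_ring_1 \<Rightarrow> 'n::ab_group_add \<Rightarrow> 'n"
  assumes f: "fvec_linear scale C f"
  shows "fvec_linear scale (\<iota> ` C) (\<lambda>w. f (w \<circ> \<iota>))"
  unfolding fvec_linear_def
proof (intro conjI ballI allI)
  fix u v :: "nat \<Rightarrow> 'a" assume u: "u \<in> fvec (\<iota> ` C)" and v: "v \<in> fvec (\<iota> ` C)"
  show "f ((\<lambda>x. u x + v x) \<circ> \<iota>) = f (u \<circ> \<iota>) + f (v \<circ> \<iota>)"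
    using fvec_linear_add[OF f comp_in_fvec[OF u] comp_in_fvec[OF v]] by (simp add: comp_def)
next
  fix r and v :: "nat \<Rightarrow> 'a" assume v: "v \<in> fvec (\<iota> ` C)"
  show "f ((\<lambda>x. r * v x) \<circ> \<iota>) = scale r (f (v \<circ> \<iota>))"
    using fvec_linear_scale[OF f comp_in_fvec[OF v]] by (simp add: comp_def)
qed

lemma is_free_resolution_reindex:
  fixes scale :: "'a::comm_ring_1 \<Rightarrow> 'n::ab_group_add \<Rightarrow> 'n"
  assumes "is_free_resolution scale B D aug"
  shows "is_free_resolution scale (\<lambda>t. \<iota> ` B t) (\<lambda>t y x. D t (inv \<iota> y) (inv \<iota> x)) (\<lambda>w. aug (w \<circ> \<iota>))"
proof -
  interpret R: free_resolution scale B D aug by (rule free_resolution.intro[OF assms])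
  let ?B = "\<lambda>t. \<iota> ` B t" and ?D = "\<lambda>t y x. D t (inv \<iota> y) (inv \<iota> x)"
  have "{v \<in> fvec (?B t). matvec (?B t) (?B (t - 1)) (?D t) v = (\<lambda>_. 0)}
      = matvec (?B (Suc t)) (?B t) (?D (Suc t)) ` fvec (?B (Suc t))" if "1 \<le> t" for t
  proof -
    obtain s where t: "t = Suc s" using \<open>1 \<le> t\<close> by (cases t) auto
    show ?thesis
      unfolding t kernel_matvec_reindex image_matvec_reindex diff_Suc_1
      using R.cycles_eq_image[of "Suc s"] by (simp add: R.cycles_Suc)
  qed
  moreover have "(\<lambda>w. aug (w \<circ> \<iota>)) ` fvec (?B 0) = UNIV"
  proof -
    have "(\<lambda>w. aug (w \<circ> \<iota>)) ` fvec (?B 0) = aug ` fvec (B 0)"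
      by (simp only: image_image[of aug "\<lambda>w. w \<circ> \<iota>", symmetric] comp_image_fvec)
    also have "\<dots> = UNIV" by (rule R.aug_image)
    finally show ?thesis .
  qed
  moreover have "{v \<in> fvec (?B 0). aug (v \<circ> \<iota>) = 0} = matvec (?B 1) (?B 0) (?D 1) ` fvec (?B 1)"
  proof -
    have "{v \<in> fvec (?B 0). aug (v \<circ> \<iota>) = 0} = {v \<in> fvec (?B 0). v \<circ> \<iota> \<in> R.cycles 0}"
      using comp_in_fvec by (auto simp: R.cycles_0)
    then show ?thesis by (simp only: image_matvec_reindex R.cycles_eq_image One_nat_def)
  qed
  moreover note fvec_linear_reindex[OF R.aug_linear] R.finite_B
  ultimately show ?thesis
    unfolding is_free_resolution_def dapp_eq_matvec fvec_linear_def by blast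
qed

lemma minimal_cx_reindex:
  "minimal_cx J B D \<Longrightarrow> minimal_cx J (\<lambda>t. \<iota> ` B t) (\<lambda>t y x. D t (inv \<iota> y) (inv \<iota> x))"
  by (auto simp: minimal_cx_def inv_f_f[OF inj])

end

text \<open>The injection \<open>\<iota>\<close> is needed because \<open>betti\<close> only considers resolutions indexed
  by \<open>nat\<close>.\<close>
lemma betti_eq_card:
  fixes B :: "nat \<Rightarrow> 'i set" and \<iota> :: "'i \<Rightarrow> nat"
  assumes inj: "inj \<iota>" and mx: "maximal_ideal J"
    and res: "is_free_resolution scale B D aug" and min: "minimal_cx J B D"
  shows "betti scale J t = card (B t)"
  unfolding betti_def
proof (rule the_equality)
  have "card (\<iota> ` B t) = card (B t)" by (rule card_image[OF inj_on_subset[OF inj subset_UNIV]])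
  then show "\<exists>B' D' aug'. is_free_resolution scale (B' :: nat \<Rightarrow> nat set) D' aug'
      \<and> minimal_cx J B' D' \<and> card (B' t) = card (B t)"
    using is_free_resolution_reindex[OF inj res] minimal_cx_reindex[OF inj min] by blast
next
  fix n assume "\<exists>B' D' aug'. is_free_resolution scale (B' :: nat \<Rightarrow> nat set) D' aug'
      \<and> minimal_cx J B' D' \<and> card (B' t) = n"
  then obtain B' :: "nat \<Rightarrow> nat set" and D' aug' where res': "is_free_resolution scale B' D' aug'"
    and min': "minimal_cx J B' D'" and n: "card (B' t) = n" by blast
  show "n = card (B t)"
    using card_le_card_if_minimal_resolution[OF mx res' min' res, where t = t]
      card_le_card_if_minimal_resolution[OF mx res min res', where t = t] n by simp
qed

section \<open>The basis of the complex \<open>S\<^sub>j F\<close>\<close>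

text \<open>Monomials of degree \<open>k\<close> in a basis of size \<open>n\<close> of the module in homological degree
  \<open>i\<close>: divided power monomials (multisets) for even \<open>i\<close>, exterior monomials (sets) for odd \<open>i\<close>.\<close>
definition monomials :: "nat \<Rightarrow> nat \<Rightarrow> nat \<Rightarrow> nat multiset set" where
  "monomials i n k = {M. set_mset M \<subseteq> {..<n} \<and> (odd i \<longrightarrow> (\<forall>x. count M x \<le> 1)) \<and> size M = k}"

lemma finite_monomials: "finite (monomials i n k)"
proof (rule finite_subset)
  show "monomials i n k \<subseteq> multisets_of_size {..<n} k"
    by (auto simp: monomials_def multisets_of_size_def)
qed (rule finite_multisets_of_size, simp)

lemma mset_set_set_mset_if_count_le_1:
  assumes "\<forall>x. count M x \<le> 1"
  shows "mset_set (set_mset M) = M"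
proof (rule multiset_eqI)
  fix x
  show "count (mset_set (set_mset M)) x = count M x"
  proof (cases "x \<in># M")
    case True
    then have "count M x = 1" using assms[rule_format, of x] by (simp add: order.antisym Suc_leI)
    then show ?thesis using True by (simp add: count_mset_set')
  qed (simp add: count_mset_set' not_in_iff)
qed

lemma card_monomials:
  "card (monomials i n k) = (if even i then (n + k - 1) choose k else n choose k)"
proof (cases "even i")
  case True
  then have "monomials i n k = multisets_of_size {..<n} k"
    by (auto simp: monomials_def multisets_of_size_def)
  then show ?thesis using True card_multisets_of_size[of "{..<n}" k] by simp
next
  case False
  have "monomials i n k = mset_set ` {A. A \<subseteq> {..<n} \<and> card A = k}"
  proof
    show "monomials i n k \<subseteq> mset_set ` {A. A \<subseteq> {..<n} \<and> card A = k}"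
    proof
      fix M assume M: "M \<in> monomials i n k"
      then have M_eq: "mset_set (set_mset M) = M"
        using False by (intro mset_set_set_mset_if_count_le_1) (simp add: monomials_def)
      then have "card (set_mset M) = k" using M size_mset_set[of "set_mset M"] by (simp add: monomials_def)
      then show "M \<in> mset_set ` {A. A \<subseteq> {..<n} \<and> card A = k}"
        using M M_eq by (intro image_eqI[of _ _ "set_mset M"]) (auto simp: monomials_def)
    qed
  next
    show "mset_set ` {A. A \<subseteq> {..<n} \<and> card A = k} \<subseteq> monomials i n k"
    proof clarify
      fix A assume A: "A \<subseteq> {..<n}" and k: "k = card A"
      then have "finite A" using finite_subset by blast
      then show "mset_set A \<in> monomials i n (card A)"
        using A by (simp add: monomials_def count_mset_set')
    qed
  qed
  moreover have "inj_on mset_set {A. A \<subseteq> {..<n} \<and> card A = k}"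
    by (rule inj_onI) (metis (mono_tags) finite_lessThan finite_set_mset_mset_set finite_subset mem_Collect_eq)
  ultimately have "card (monomials i n k) = card {A. A \<subseteq> {..<n} \<and> card A = k}"
    by (simp add: card_image)
  also have "\<dots> = n choose k" using n_subsets[of "{..<n}" k] by simp
  finally show ?thesis using False by simp
qed

lemma bij_betw_nth_PiE:
  "bij_betw (\<lambda>xs. restrict ((!) xs) {..<n}) {xs. length xs = n \<and> (\<forall>i<n. xs ! i \<in> S i)} (PiE {..<n} S)"
proof (rule bij_betw_byWitness[where f' = "\<lambda>g. map g [0..<n]"])
  show "\<forall>xs\<in>{xs. length xs = n \<and> (\<forall>i<n. xs ! i \<in> S i)}. map (restrict ((!) xs) {..<n}) [0..<n] = xs"
  proof
    fix xs assume "xs \<in> {xs. length xs = n \<and> (\<forall>i<n. xs ! i \<in> S i)}"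
    then have "map (restrict ((!) xs) {..<n}) [0..<n] = map ((!) xs) [0..<length xs]"
      by (intro map_cong) auto
    then show "map (restrict ((!) xs) {..<n}) [0..<n] = xs" by (simp add: map_nth)
  qed
  show "\<forall>g\<in>PiE {..<n} S. restrict ((!) (map g [0..<n])) {..<n} = g"
    by (auto simp: PiE_def extensional_def fun_eq_iff)
  show "(\<lambda>xs. restrict ((!) xs) {..<n}) ` {xs. length xs = n \<and> (\<forall>i<n. xs ! i \<in> S i)} \<subseteq> PiE {..<n} S"
    by (rule image_subsetI) (simp add: restrict_PiE_iff)
  show "(\<lambda>g. map g [0..<n]) ` PiE {..<n} S \<subseteq> {xs. length xs = n \<and> (\<forall>i<n. xs ! i \<in> S i)}"
    by (auto simp: PiE_def Pi_def)
qed

lemma card_lists_nth_in: "card {xs. length xs = n \<and> (\<forall>i<n. xs ! i \<in> S i)} = (\<Prod>i<n. card (S i))"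
  by (rule trans[OF bij_betw_same_card[OF bij_betw_nth_PiE] card_PiE]) simp

lemma finite_lists_nth_in:
  assumes "\<And>i. i < n \<Longrightarrow> finite (S i)"
  shows "finite {xs. length xs = n \<and> (\<forall>i<n. xs ! i \<in> S i)}"
proof -
  have "finite (PiE {..<n} S)" using assms by (intro finite_PiE) auto
  then show ?thesis using bij_betw_finite[OF bij_betw_nth_PiE] by blast
qed

lemma finite_tuples: "finite (tuples p j t)"
proof (rule finite_subset)
  show "tuples p j t \<subseteq> (\<lambda>f i. if i \<le> p then f i else 0) ` PiE {..p} (\<lambda>_. {..j})"
  proof
    fix a assume a: "a \<in> tuples p j t"
    have "a i \<le> j" if "i \<le> p" for i
      using a member_le_sum[of i "{..p}" a] that by (simp add: tuples_def)
    moreover have "a = (\<lambda>i. if i \<le> p then restrict a {..p} i else 0)"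
      using a by (auto simp: tuples_def fun_eq_iff)
    ultimately show "a \<in> (\<lambda>f i. if i \<le> p then f i else 0) ` PiE {..p} (\<lambda>_. {..j})"
      by (intro image_eqI[of _ _ "restrict a {..p}"]) auto
  qed
qed (intro finite_imageI finite_PiE; simp)

lemma SjB_eq_UN:
  "SjB p b j t = (\<Union>a\<in>tuples p j t. {L. length L = Suc p \<and> (\<forall>i<Suc p. L ! i \<in> monomials i (b i) (a i))})"
proof
  show "SjB p b j t \<subseteq> (\<Union>a\<in>tuples p j t. {L. length L = Suc p \<and> (\<forall>i<Suc p. L ! i \<in> monomials i (b i) (a i))})"
  proof
    fix L assume L: "L \<in> SjB p b j t"
    define a where "a i = (if i \<le> p then size (L ! i) else 0)" for i
    have "a \<in> tuples p j t" using L by (simp add: tuples_def SjB_def a_def)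
    moreover have "\<forall>i<Suc p. L ! i \<in> monomials i (b i) (a i)"
      using L by (simp add: SjB_def monomials_def a_def)
    ultimately show "L \<in> (\<Union>a\<in>tuples p j t. {L. length L = Suc p \<and> (\<forall>i<Suc p. L ! i \<in> monomials i (b i) (a i))})"
      using L by (auto simp: SjB_def)
  qed
next
  show "(\<Union>a\<in>tuples p j t. {L. length L = Suc p \<and> (\<forall>i<Suc p. L ! i \<in> monomials i (b i) (a i))}) \<subseteq> SjB p b j t"
  proof safe
    fix a L assume a: "a \<in> tuples p j t" and len: "length L = Suc p"
      and L: "\<forall>i<Suc p. L ! i \<in> monomials i (b i) (a i)"
    have "size (L ! i) = a i" if "i \<le> p" for i using L that by (simp add: monomials_def)
    then show "L \<in> SjB p b j t" using a len L by (auto simp: tuples_def SjB_def monomials_def)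
  qed
qed

lemma card_SjB: "card (SjB p b j t) =
   (\<Sum>a\<in>tuples p j t. \<Prod>i\<le>p. if even i then (b i + a i - 1) choose a i else b i choose a i)"
proof -
  let ?L = "\<lambda>a. {L. length L = Suc p \<and> (\<forall>i<Suc p. L ! i \<in> monomials i (b i) (a i))}"
  have disjoint: "?L a \<inter> ?L a' = {}" if "a \<in> tuples p j t" "a' \<in> tuples p j t" "a \<noteq> a'" for a a'
  proof -
    obtain i where i: "a i \<noteq> a' i" using \<open>a \<noteq> a'\<close> by blast
    have "i \<le> p"
    proof (rule ccontr)
      assume "\<not> i \<le> p"
      then have "a i = 0" "a' i = 0" using that(1,2) by (auto simp: tuples_def)
      then show False using i by simp
    qed
    show ?thesis
    proof (rule ccontr)
      assume "?L a \<inter> ?L a' \<noteq> {}"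
      then obtain L where "\<forall>i<Suc p. L ! i \<in> monomials i (b i) (a i)"
        and "\<forall>i<Suc p. L ! i \<in> monomials i (b i) (a' i)" by blast
      then have "L ! i \<in> monomials i (b i) (a i)" "L ! i \<in> monomials i (b i) (a' i)"
        using \<open>i \<le> p\<close> by auto
      then show False using i by (simp add: monomials_def)
    qed
  qed
  have "\<forall>a\<in>tuples p j t. finite (?L a)" by (simp add: finite_lists_nth_in finite_monomials)
  then have "card (SjB p b j t) = (\<Sum>a\<in>tuples p j t. card (?L a))"
    unfolding SjB_eq_UN by (rule card_UN_disjoint[OF finite_tuples]) (use disjoint in blast)
  then show ?thesis
    by (simp add: card_lists_nth_in card_monomials lessThan_Suc_atMost)
qed

lemma minimal_cx_SjD:
  assumes J: "is_ideal J" and min: "minimal_cx J (\<lambda>i. {..<b i}) \<phi>"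
  shows "minimal_cx J (SjB p b j) (SjD p b \<phi>)"
  unfolding minimal_cx_def
proof (intro allI impI ballI)
  fix t L' L assume L: "L \<in> SjB p b j t"
  have "SjComp \<phi> i L l m \<in> J" if "i < p" "l \<in># L ! Suc i" "m < b i" for i l m
  proof -
    have "\<forall>i\<le>p. set_mset (L ! i) \<subseteq> {..<b i}" using L by (simp add: SjB_def)
    then have "set_mset (L ! Suc i) \<subseteq> {..<b (Suc i)}" using that(1) by simp
    then have "l < b (Suc i)" using that(2) by blast
    then have "\<phi> (Suc i) m l \<in> J" using min[unfolded minimal_cx_def, rule_format, of "Suc i" m l] that(3) by simp
    then show ?thesis
      unfolding SjComp_def
      by (intro is_ideal_mult_left[OF J]) (simp add: is_ideal_0[OF J] is_ideal_mult_left[OF J] is_ideal_uminus[OF J])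
  qed
  then show "SjD p b \<phi> t L' L \<in> J"
    unfolding SjD_def by (intro is_ideal_sum[OF J]) (auto simp: is_ideal_0[OF J])
qed

lemma inj_to_nat_sorted_multisets: "inj (\<lambda>L :: nat multiset list. to_nat (map sorted_list_of_multiset L))"
proof (rule injI)
  fix L L' :: "nat multiset list"
  assume "to_nat (map sorted_list_of_multiset L) = to_nat (map sorted_list_of_multiset L')"
  then have "map mset (map sorted_list_of_multiset L) = map mset (map sorted_list_of_multiset L')"
    by simp
  then show "L = L'" by (simp add: comp_def)
qed

theorem proposition5p1:
  fixes scaleM :: "'a::comm_ring_1 \<Rightarrow> 'm::ab_group_add \<Rightarrow> 'm"
    and scaleN :: "'a \<Rightarrow> 'n::ab_group_add \<Rightarrow> 'n"
    and mm :: "'a set" and j p :: nat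
    and b :: "nat \<Rightarrow> nat" and \<phi> :: "nat \<Rightarrow> nat \<Rightarrow> nat \<Rightarrow> 'a"
    and \<epsilon> :: "(nat \<Rightarrow> 'a) \<Rightarrow> 'm" and \<sigma> :: "'m list \<Rightarrow> 'n"
  assumes "noetherian_ring TYPE('a)" and "local_ring mm"
    and "module scaleM" and "fin_gen scaleM"
    and "j \<ge> 2"
    and "pdim scaleM = p"
    and "is_free_resolution scaleM (\<lambda>i. {..<b i}) \<phi> \<epsilon>"
    and "minimal_cx mm (\<lambda>i. {..<b i}) \<phi>"
    and "\<forall>i>p. b i = 0"
    and "module scaleN" and "is_sym_power scaleM scaleN j \<sigma>"
    and "\<exists>aug. is_free_resolution scaleN (SjB p b j) (SjD p b \<phi>) aug"
  shows "minimal_cx mm (SjB p b j) (SjD p b \<phi>) \<longleftrightarrow>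
    (\<forall>t \<le> pdim scaleN. betti scaleN mm t =
       (\<Sum>a\<in>tuples p j t.
          (\<Prod>i\<le>p. if even i then (betti scaleM mm i + a i - 1) choose a i
                              else betti scaleM mm i choose a i)))"
proof -
  have mx: "maximal_ideal mm" using assms(2) by (simp add: local_ring_def)
  have min: "minimal_cx mm (SjB p b j) (SjD p b \<phi>)"
    by (rule minimal_cx_SjD[OF maximal_ideal_is_ideal[OF mx] assms(8)])
  obtain aug where res: "is_free_resolution scaleN (SjB p b j) (SjD p b \<phi>) aug"
    using assms(12) by blast
  have betti_M: "betti scaleM mm i = b i" for i
    using betti_eq_card[OF inj_on_id mx assms(7,8)] by simp
  have betti_N: "betti scaleN mm t = card (SjB p b j t)" for t
    by (rule betti_eq_card[OF inj_to_nat_sorted_multisets mx res min])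
  show ?thesis unfolding betti_M betti_N card_SjB using min by simp
qed

end
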